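(* If $G$ is a minimally $1/2$-tough claw-free graph, then for every edge $e$ of $G$ there exists a witness set $S=S(e)\subseteq V(G)$ for $e$ (in the sense defined in the context, with $t=1/2$) such that $|S|\le 1$.
   Context: All graphs are finite, simple and undirected. A graph is claw-free if it contains no induced subgraph isomorphic to $K_{1,3}$. $\omega(H)$ denotes the number of components of $H$. A cutset of $G$ is a vertex set $S$ with $G-S$ disconnected. For positive real $t$, $G$ is $t$-tough if $\omega(G-S)\le |S|/t$ for every cutset $S$; the toughness $\tau(G)$ is the largest such $t$, with $\tau(K_n)=\infty$ for all $n\ge1$. $G$ is minimally $t$-tough if $\tau(G)=t$ and $\tau(G-e)<t$ for every edge $e$. For a minimally $t$-tough graph $G$ and an edge $e$, a witness set for $e$ is a set $S\subseteq V(G)$ such that either $e$ is a bridge of $G$ and $S=\emptyset$, or $e$ is not a bridge of $G$, $\omega(G-S)\le |S|/t$, $\omega((G-e)-S)>|S|/t$, and $e$ is a bridge in $G-S$. *)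

theory Defs
  imports "HOL-Library.Extended_Real"
begin

definition graph :: "'a set \<Rightarrow> 'a set set \<Rightarrow> bool" where
  "graph V E \<longleftrightarrow> finite V \<and> (\<forall>e\<in>E. \<exists>u v. u \<noteq> v \<and> u \<in> V \<and> v \<in> V \<and> e = {u, v})"

definition adj_rel :: "'a set \<Rightarrow> 'a set set \<Rightarrow> ('a \<times> 'a) set" where
  "adj_rel V E = {(x, y). x \<in> V \<and> y \<in> V \<and> {x, y} \<in> E}"

definition components :: "'a set \<Rightarrow> 'a set set \<Rightarrow> 'a set set" where
  "components V E = (\<lambda>v. {u \<in> V. (v, u) \<in> (adj_rel V E)\<^sup>*}) ` V"

definition ncomp :: "'a set \<Rightarrow> 'a set set \<Rightarrow> nat" where
  "ncomp V E = card (components V E)"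

definition del_verts_E :: "'a set set \<Rightarrow> 'a set \<Rightarrow> 'a set set" where
  "del_verts_E E S = {e \<in> E. e \<inter> S = {}}"

definition cutset :: "'a set \<Rightarrow> 'a set set \<Rightarrow> 'a set \<Rightarrow> bool" where
  "cutset V E S \<longleftrightarrow> S \<subseteq> V \<and> ncomp (V - S) (del_verts_E E S) > 1"

definition tough :: "'a set \<Rightarrow> 'a set set \<Rightarrow> real \<Rightarrow> bool" where
  "tough V E t \<longleftrightarrow> (\<forall>S. cutset V E S \<longrightarrow> real (ncomp (V - S) (del_verts_E E S)) \<le> real (card S) / t)"

text \<open>Toughness: the largest positive t such that G is t-tough (infinity for complete
  graphs, where every t works; 0 if no positive t works, i.e. for disconnected graphs).\<close>

definition toughness :: "'a set \<Rightarrow> 'a set set \<Rightarrow> ereal" where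
  "toughness V E = Sup ({0} \<union> {ereal t | t. t > 0 \<and> tough V E t})"

definition minimally_tough :: "'a set \<Rightarrow> 'a set set \<Rightarrow> real \<Rightarrow> bool" where
  "minimally_tough V E t \<longleftrightarrow>
     toughness V E = ereal t \<and> (\<forall>e\<in>E. toughness V (E - {e}) < ereal t)"

definition claw_free :: "'a set \<Rightarrow> 'a set set \<Rightarrow> bool" where
  "claw_free V E \<longleftrightarrow> \<not> (\<exists>v a b c. v \<in> V \<and> a \<in> V \<and> b \<in> V \<and> c \<in> V \<and>
      distinct [v, a, b, c] \<and> {v, a} \<in> E \<and> {v, b} \<in> E \<and> {v, c} \<in> E \<and>
      {a, b} \<notin> E \<and> {a, c} \<notin> E \<and> {b, c} \<notin> E)"

definition bridge :: "'a set \<Rightarrow> 'a set set \<Rightarrow> 'a set \<Rightarrow> bool" where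
  "bridge V E e \<longleftrightarrow> e \<in> E \<and> ncomp V (E - {e}) > ncomp V E"

definition witness_set :: "'a set \<Rightarrow> 'a set set \<Rightarrow> real \<Rightarrow> 'a set \<Rightarrow> 'a set \<Rightarrow> bool" where
  "witness_set V E t e S \<longleftrightarrow> S \<subseteq> V \<and>
     ((bridge V E e \<and> S = {}) \<or>
      (\<not> bridge V E e \<and>
       real (ncomp (V - S) (del_verts_E E S)) \<le> real (card S) / t \<and>
       real (ncomp (V - S) (del_verts_E (E - {e}) S)) > real (card S) / t \<and>
       bridge (V - S) (del_verts_E E S) e))"

end

theory Submission
  imports Defs
begin

text \<open>Deleting an edge, or putting back a deleted vertex s of a claw-free graph, can change the
  number of components by at most one: in the second case because the neighbours of s meet at
  most two components (three would give a claw centred at s). For a non-bridge e, the failure of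
  1/2-toughness of G - e yields S with \<omega>((G - e) - S) > 2|S| \<ge> \<omega>(G - S), which is already a
  witness set. If |S| \<ge> 2, restoring one vertex s of S leaves at least \<omega>((G - e) - S) - 2 > 2|S| - 2
  components, contradicting the 1/2-toughness of G at the cutset S - {s}.\<close>

lemma adj_rel_sym: "(x, y) \<in> adj_rel V E \<Longrightarrow> (y, x) \<in> adj_rel V E"
  by (auto simp: adj_rel_def insert_commute)

lemma adj_rel_rtrancl_sym: "(x, y) \<in> (adj_rel V E)\<^sup>* \<Longrightarrow> (y, x) \<in> (adj_rel V E)\<^sup>*"
  by (induction rule: rtrancl_induct) (auto intro: converse_rtrancl_into_rtrancl adj_rel_sym)

lemma adj_rel_rtrancl_closed: "(x, y) \<in> (adj_rel V E)\<^sup>* \<Longrightarrow> x \<in> V \<Longrightarrow> y \<in> V"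
  by (induction rule: rtrancl_induct) (auto simp: adj_rel_def)

definition component_of :: "'a set \<Rightarrow> 'a set set \<Rightarrow> 'a \<Rightarrow> 'a set" where
  "component_of V E v = {u \<in> V. (v, u) \<in> (adj_rel V E)\<^sup>*}"

lemma components_eq_image: "components V E = component_of V E ` V"
  by (simp add: components_def component_of_def)

lemma finite_components: "finite V \<Longrightarrow> finite (components V E)"
  by (simp add: components_eq_image)

lemma component_of_self: "v \<in> V \<Longrightarrow> v \<in> component_of V E v"
  by (simp add: component_of_def)

lemma component_of_subset: "component_of V E v \<subseteq> V"
  by (auto simp: component_of_def)

lemma component_of_eq:
  assumes "(a, b) \<in> (adj_rel V E)\<^sup>*"
  shows "component_of V E a = component_of V E b"
  using assms adj_rel_rtrancl_sym[OF assms] unfolding component_of_def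
  by (blast intro: rtrancl_trans)

lemma rtrancl_subrel_if_exits_unreachable:
  assumes exits: "\<And>x y. (x, y) \<in> R \<Longrightarrow> (x, y) \<notin> R' \<Longrightarrow> x \<in> X"
    and unreachable: "\<forall>x\<in>X. (w, x) \<notin> R'\<^sup>*"
    and "(w, y) \<in> R\<^sup>*"
  shows "(w, y) \<in> R'\<^sup>*"
  using \<open>(w, y) \<in> R\<^sup>*\<close>
proof (induction rule: rtrancl_induct)
  case base
  show ?case by simp
next
  case (step y z)
  then have "y \<notin> X" using unreachable by blast
  then have "(y, z) \<in> R'" using exits step.hyps(2) by blast
  with step.IH show ?case by (rule rtrancl_into_rtrancl)
qed

lemma component_of_supergraph_eq:
  assumes "W \<subseteq> W'" "adj_rel W F \<subseteq> adj_rel W' F'" "w \<in> W"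
    and "\<And>x y. (x, y) \<in> adj_rel W' F' \<Longrightarrow> (x, y) \<notin> adj_rel W F \<Longrightarrow> x \<in> X"
    and "\<forall>x\<in>X. (w, x) \<notin> (adj_rel W F)\<^sup>*"
  shows "component_of W' F' w = component_of W F w"
proof
  show "component_of W' F' w \<subseteq> component_of W F w"
  proof
    fix y assume "y \<in> component_of W' F' w"
    then have "(w, y) \<in> (adj_rel W F)\<^sup>*"
      using rtrancl_subrel_if_exits_unreachable[OF assms(4,5)] by (simp add: component_of_def)
    then show "y \<in> component_of W F w"
      using adj_rel_rtrancl_closed assms(3) by (simp add: component_of_def)
  qed
  show "component_of W F w \<subseteq> component_of W' F' w"
    using rtrancl_mono[OF assms(2)] assms(1) by (auto simp: component_of_def)
qed

lemma card_le_Suc_card_if_subset_Diff_Un: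
  assumes "finite B" "b \<in> B" "A \<subseteq> (B - {b}) \<union> K" "finite K" "card K \<le> 2"
  shows "card A \<le> card B + 1"
proof -
  have "card A \<le> card (B - {b}) + card K"
    using card_mono[OF _ assms(3)] card_Un_le[of "B - {b}" K] assms(1,4) by fastforce
  moreover have "card (B - {b}) + 1 = card B"
    using assms(1,2) card_Suc_Diff1 by fastforce
  ultimately show ?thesis using assms(5) by linarith
qed

lemma ncomp_Diff_edge_le:
  assumes "finite W" "u \<in> W" "v \<in> W"
  shows "ncomp W (F - {{u, v}}) \<le> ncomp W F + 1"
proof -
  let ?F = "F - {{u, v}}"
  have "components W ?F \<subseteq>
      (components W F - {component_of W F u}) \<union> {component_of W ?F u, component_of W ?F v}"
  proof
    fix C assume "C \<in> components W ?F"
    then obtain w where w: "w \<in> W" "C = component_of W ?F w"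
      by (auto simp: components_eq_image)
    show "C \<in> (components W F - {component_of W F u}) \<union> {component_of W ?F u, component_of W ?F v}"
    proof (cases "(w, u) \<in> (adj_rel W ?F)\<^sup>* \<or> (w, v) \<in> (adj_rel W ?F)\<^sup>*")
      case True
      then have "C = component_of W ?F u \<or> C = component_of W ?F v"
        using w(2) component_of_eq by metis
      then show ?thesis by blast
    next
      case False
      have sub: "adj_rel W ?F \<subseteq> adj_rel W F"
        by (auto simp: adj_rel_def)
      have exits: "x \<in> {u, v}" if "(x, y) \<in> adj_rel W F" "(x, y) \<notin> adj_rel W ?F" for x y
        using that by (auto simp: adj_rel_def doubleton_eq_iff)
      have "component_of W F w = C"
        unfolding w(2)
        by (rule component_of_supergraph_eq[OF order_refl sub w(1), where X = "{u, v}"])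
          (use exits False in auto)
      moreover have "u \<notin> C" using False w by (simp add: component_of_def)
      ultimately have "component_of W F w \<noteq> component_of W F u"
        using component_of_self[OF assms(2)] by blast
      with \<open>component_of W F w = C\<close> w(1) show ?thesis by (auto simp: components_eq_image)
    qed
  qed
  moreover have "card {component_of W ?F u, component_of W ?F v} \<le> 2"
    by (simp add: card_insert_le_m1)
  moreover have "component_of W F u \<in> components W F"
    using assms(2) by (simp add: components_eq_image)
  ultimately show ?thesis
    unfolding ncomp_def
    by (intro card_le_Suc_card_if_subset_Diff_Un finite_components assms(1)) auto
qed

lemma claw_free_card_neighbour_components_le_2:
  assumes "claw_free V E" "S \<subseteq> V" "s \<in> S"
  shows "card (component_of (V - S) (del_verts_E E S) ` {n \<in> V - S. {n, s} \<in> E}) \<le> 2"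
proof (rule ccontr)
  let ?C = "component_of (V - S) (del_verts_E E S)"
  let ?N = "{n \<in> V - S. {n, s} \<in> E}"
  assume "\<not> ?thesis"
  then have "3 \<le> card (?C ` ?N)" by simp
  then obtain T where T: "T \<subseteq> ?C ` ?N" "card T = 3"
    by (rule obtain_subset_with_card_n)
  from T(2) obtain x y z where "T = {x, y, z}" "x \<noteq> y" "y \<noteq> z" "x \<noteq> z"
    unfolding card_3_iff by blast
  with T(1) have xyz: "x \<in> ?C ` ?N" "y \<in> ?C ` ?N" "z \<in> ?C ` ?N" by auto
  obtain a b c where abc: "a \<in> ?N" "b \<in> ?N" "c \<in> ?N" "x = ?C a" "y = ?C b" "z = ?C c"
    using xyz by (elim imageE) simp
  with \<open>x \<noteq> y\<close> \<open>y \<noteq> z\<close> \<open>x \<noteq> z\<close>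
  have distinct_components: "?C a \<noteq> ?C b" "?C a \<noteq> ?C c" "?C b \<noteq> ?C c" by auto
  have nonadjacent: "{x, y} \<notin> E" if "x \<in> ?N" "y \<in> ?N" "?C x \<noteq> ?C y" for x y
  proof
    assume "{x, y} \<in> E"
    with that(1,2) have "(x, y) \<in> adj_rel (V - S) (del_verts_E E S)"
      by (auto simp: adj_rel_def del_verts_E_def)
    then have "?C x = ?C y" by (intro component_of_eq) auto
    with that(3) show False by blast
  qed
  have "s \<in> V" "a \<in> V" "b \<in> V" "c \<in> V" using abc assms(2,3) by auto
  moreover have "distinct [s, a, b, c]" using abc distinct_components assms(3) by auto
  moreover have "{s, a} \<in> E" "{s, b} \<in> E" "{s, c} \<in> E"
    using abc by (auto simp: insert_commute)
  moreover have "{a, b} \<notin> E" "{a, c} \<notin> E" "{b, c} \<notin> E"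
    using nonadjacent abc distinct_components by auto
  ultimately show False
    using assms(1) unfolding claw_free_def by blast
qed

lemma claw_free_ncomp_del_verts_le:
  assumes "finite V" "claw_free V E" "S \<subseteq> V" "s \<in> S"
  shows "ncomp (V - S) (del_verts_E E S) \<le> ncomp (V - (S - {s})) (del_verts_E E (S - {s})) + 1"
proof -
  define W where "W = V - S"
  define F where "F = del_verts_E E S"
  define W' where "W' = V - (S - {s})"
  define F' where "F' = del_verts_E E (S - {s})"
  define N where "N = {n \<in> W. {n, s} \<in> E}"
  have "s \<notin> W" "s \<in> W'" using assms(3,4) by (auto simp: W_def W'_def)
  have covered: "components W F \<subseteq>
      (components W' F' - {component_of W' F' s}) \<union> component_of W F ` N"
  proof
    fix C assume "C \<in> components W F"
    then obtain w where w: "w \<in> W" "C = component_of W F w"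
      by (auto simp: components_eq_image)
    show "C \<in> (components W' F' - {component_of W' F' s}) \<union> component_of W F ` N"
    proof (cases "\<exists>n\<in>N. (w, n) \<in> (adj_rel W F)\<^sup>*")
      case True
      then obtain n where "n \<in> N" "(w, n) \<in> (adj_rel W F)\<^sup>*" by blast
      then have "C = component_of W F n" using w(2) by (simp add: component_of_eq)
      with \<open>n \<in> N\<close> show ?thesis by blast
    next
      case False
      have sub: "adj_rel W F \<subseteq> adj_rel W' F'"
        by (auto simp: adj_rel_def W_def W'_def F_def F'_def del_verts_E_def)
      have exits: "x \<in> insert s N" if "(x, y) \<in> adj_rel W' F'" "(x, y) \<notin> adj_rel W F" for x y
        using that by (auto simp: adj_rel_def W_def W'_def F_def F'_def del_verts_E_def N_def)
      have "(w, s) \<notin> (adj_rel W F)\<^sup>*"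
        using adj_rel_rtrancl_closed[of w s W F] w(1) \<open>s \<notin> W\<close> by blast
      with False have unreachable: "\<forall>x\<in>insert s N. (w, x) \<notin> (adj_rel W F)\<^sup>*" by blast
      have "W \<subseteq> W'" by (auto simp: W_def W'_def)
      have "component_of W' F' w = C"
        unfolding w(2)
        using component_of_supergraph_eq[OF \<open>W \<subseteq> W'\<close> sub w(1) exits unreachable] .
      moreover have "s \<notin> C" using \<open>s \<notin> W\<close> w(2) component_of_subset[of W F w] by blast
      ultimately have "component_of W' F' w \<noteq> component_of W' F' s"
        using component_of_self[OF \<open>s \<in> W'\<close>] by blast
      with \<open>component_of W' F' w = C\<close> w(1) \<open>W \<subseteq> W'\<close> show ?thesis
        by (auto simp: components_eq_image)
    qed
  qed
  have "card (component_of W F ` N) \<le> 2"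
    using claw_free_card_neighbour_components_le_2[OF assms(2-4)] by (simp add: W_def F_def N_def)
  moreover have "component_of W' F' s \<in> components W' F'"
    using \<open>s \<in> W'\<close> by (simp add: components_eq_image)
  moreover have "finite (components W' F')"
    using assms(1) by (simp add: W'_def finite_components)
  moreover have "finite (component_of W F ` N)"
    using assms(1) by (simp add: N_def W_def)
  ultimately have "ncomp W F \<le> ncomp W' F' + 1"
    unfolding ncomp_def using card_le_Suc_card_if_subset_Diff_Un[OF _ _ covered] by blast
  then show ?thesis by (simp add: W_def F_def W'_def F'_def)
qed

lemma tough_if_toughness_eq:
  assumes "toughness V E = ereal t" "t > 0"
  shows "tough V E t"
proof (rule ccontr)
  assume "\<not> tough V E t"
  then obtain S where cut: "cutset V E S"
    and many: "real (card S) / t < real (ncomp (V - S) (del_verts_E E S))"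
    by (auto simp: tough_def)
  define w where "w = real (ncomp (V - S) (del_verts_E E S))"
  define c where "c = real (card S)"
  have "w > 1" using cut by (simp add: cutset_def w_def)
  have "toughness V E \<le> ereal (c / w)"
    unfolding toughness_def
  proof (rule Sup_least)
    fix x assume "x \<in> {0} \<union> {ereal t |t. 0 < t \<and> tough V E t}"
    then consider "x = 0" | t' where "x = ereal t'" "t' > 0" "tough V E t'" by blast
    then show "x \<le> ereal (c / w)"
    proof cases
      case 1
      then show ?thesis using \<open>w > 1\<close> by (simp add: c_def)
    next
      case 2
      then have "w \<le> c / t'" using cut by (auto simp: tough_def w_def c_def)
      then have "t' \<le> c / w" using \<open>t' > 0\<close> \<open>w > 1\<close> by (simp add: field_simps)
      then show ?thesis using 2 by simp
    qed
  qed
  moreover have "c / w < t"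
    using many assms(2) \<open>w > 1\<close> by (simp add: w_def c_def field_simps)
  ultimately show False using assms(1) by simp
qed

lemma not_tough_if_toughness_less:
  assumes "toughness V E < ereal t" "t > 0"
  shows "\<not> tough V E t"
proof
  assume "tough V E t"
  then have "ereal t \<le> toughness V E"
    unfolding toughness_def using assms(2) by (intro Sup_upper) blast
  with assms(1) show False by simp
qed

lemma del_verts_E_empty [simp]: "del_verts_E E {} = E"
  by (simp add: del_verts_E_def)

lemma del_verts_E_Diff_edge: "del_verts_E (E - {e}) S = del_verts_E E S - {e}"
  by (auto simp: del_verts_E_def)

lemma ncomp_le_1_if_tough:
  assumes "tough V E t"
  shows "ncomp V E \<le> 1"
proof (rule ccontr)
  assume "\<not> ?thesis"
  then have "cutset V E {}" by (simp add: cutset_def)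
  with assms have "real (ncomp (V - {}) (del_verts_E E {})) \<le> real (card ({} :: 'a set)) / t"
    unfolding tough_def by blast
  with \<open>\<not> ncomp V E \<le> 1\<close> show False by simp
qed

lemma witness_set_exists:
  assumes "finite V" "minimally_tough V E t" "0 < t" "t \<le> 1" "e \<in> E"
  shows "\<exists>S. witness_set V E t e S"
proof (cases "bridge V E e")
  case True
  then show ?thesis by (auto simp: witness_set_def)
next
  case nonbridge: False
  have "tough V E t"
    using assms(2,3) by (simp add: minimally_tough_def tough_if_toughness_eq)
  have "\<not> tough V (E - {e}) t"
    using assms(2,3,5) by (simp add: minimally_tough_def not_tough_if_toughness_less)
  then obtain S where cut: "cutset V (E - {e}) S"
    and many: "real (card S) / t < real (ncomp (V - S) (del_verts_E (E - {e}) S))"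
    by (auto simp: tough_def)
  define a where "a = ncomp (V - S) (del_verts_E E S)"
  define b where "b = ncomp (V - S) (del_verts_E (E - {e}) S)"
  have "S \<subseteq> V" using cut by (simp add: cutset_def)
  have "S \<noteq> {}"
  proof
    assume "S = {}"
    then have "ncomp V E < ncomp V (E - {e})"
      using cut ncomp_le_1_if_tough[OF \<open>tough V E t\<close>] by (simp add: cutset_def)
    with nonbridge assms(5) show False by (simp add: bridge_def)
  qed
  have few: "real a \<le> real (card S) / t"
  proof (cases "cutset V E S")
    case True
    with \<open>tough V E t\<close> show ?thesis by (simp add: tough_def a_def)
  next
    case False
    then have "a \<le> 1" using \<open>S \<subseteq> V\<close> by (simp add: cutset_def a_def)
    moreover have "1 \<le> card S"
      using \<open>S \<noteq> {}\<close> finite_subset[OF \<open>S \<subseteq> V\<close> assms(1)] by (simp add: Suc_leI card_gt_0_iff)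
    moreover have "real (card S) \<le> real (card S) / t"
      using assms(3,4) by (simp add: le_divide_eq mult_left_le)
    ultimately show ?thesis by linarith
  qed
  with many have "a < b" by (simp add: b_def)
  have "e \<inter> S = {}"
  proof (rule ccontr)
    assume "e \<inter> S \<noteq> {}"
    then have "del_verts_E (E - {e}) S = del_verts_E E S" by (auto simp: del_verts_E_def)
    then have "b = a" by (simp add: a_def b_def)
    with \<open>a < b\<close> show False by simp
  qed
  with assms(5) have "e \<in> del_verts_E E S" by (simp add: del_verts_E_def)
  with \<open>a < b\<close> have "bridge (V - S) (del_verts_E E S) e"
    by (simp add: bridge_def a_def b_def del_verts_E_Diff_edge)
  with \<open>S \<subseteq> V\<close> nonbridge few many show ?thesis
    unfolding witness_set_def a_def by blast
qed

lemma witness_set_ncomp_gt: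
  assumes "graph V E" "witness_set V E t e S" "S \<noteq> {}"
  shows "real (card S) / t < real (ncomp (V - S) (del_verts_E E S)) + 1"
proof -
  from assms(2,3) have "S \<subseteq> V" and br: "bridge (V - S) (del_verts_E E S) e"
    and many: "real (card S) / t < real (ncomp (V - S) (del_verts_E (E - {e}) S))"
    by (auto simp: witness_set_def)
  from br have "e \<in> E" "e \<inter> S = {}" by (auto simp: bridge_def del_verts_E_def)
  then obtain u v where "u \<in> V" "v \<in> V" "e = {u, v}"
    using assms(1) unfolding graph_def by blast
  with \<open>e \<inter> S = {}\<close> have "u \<in> V - S" "v \<in> V - S" by auto
  moreover have "finite V" using assms(1) by (simp add: graph_def)
  ultimately have "ncomp (V - S) (del_verts_E (E - {e}) S) \<le> ncomp (V - S) (del_verts_E E S) + 1"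
    using ncomp_Diff_edge_le[of "V - S" u v "del_verts_E E S"] \<open>e = {u, v}\<close>
    by (simp add: del_verts_E_Diff_edge)
  with many show ?thesis by linarith
qed

lemma card_witness_set_le_1:
  assumes "graph V E" "claw_free V E" "tough V E t" "0 < t" "t \<le> 1/2"
    and "witness_set V E t e S"
  shows "card S \<le> 1"
proof (rule ccontr)
  assume "\<not> card S \<le> 1"
  define k where "k = card S"
  have "k \<ge> 2" "S \<noteq> {}" using \<open>\<not> card S \<le> 1\<close> by (auto simp: k_def)
  have "finite V" using assms(1) by (simp add: graph_def)
  have "S \<subseteq> V" using assms(6) by (simp add: witness_set_def)
  obtain s where "s \<in> S" using \<open>S \<noteq> {}\<close> by blast
  define c where "c = ncomp (V - (S - {s})) (del_verts_E E (S - {s}))"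
  have "real (ncomp (V - S) (del_verts_E E S)) \<le> real c + 1"
    using claw_free_ncomp_del_verts_le[OF \<open>finite V\<close> assms(2) \<open>S \<subseteq> V\<close> \<open>s \<in> S\<close>]
    by (simp add: c_def)
  with witness_set_ncomp_gt[OF assms(1,6) \<open>S \<noteq> {}\<close>]
  have "real k / t - 2 < real c" by (simp add: k_def)
  define r where "r = 1 / t"
  have "r \<ge> 2" using assms(4,5) by (simp add: r_def field_simps)
  have "real k * r - 2 \<ge> (real k - 1) * r" using \<open>r \<ge> 2\<close> by (simp add: algebra_simps)
  with \<open>real k / t - 2 < real c\<close> have c_large: "real c > (real k - 1) * r" by (simp add: r_def)
  moreover have "(real k - 1) * r \<ge> 2"
    using mult_mono[of 1 "real k - 1" 2 r] \<open>k \<ge> 2\<close> \<open>r \<ge> 2\<close> by simp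
  ultimately have "cutset V E (S - {s})" using \<open>S \<subseteq> V\<close> by (auto simp: cutset_def c_def)
  with assms(3) have "real c \<le> real (card (S - {s})) / t" unfolding tough_def c_def by blast
  moreover have "real (card (S - {s})) / t = (real k - 1) * r"
    using \<open>s \<in> S\<close> \<open>k \<ge> 2\<close> finite_subset[OF \<open>S \<subseteq> V\<close> \<open>finite V\<close>]
    by (simp add: k_def r_def of_nat_diff)
  ultimately show False using c_large by linarith
qed

theorem mainTheorem9:
  fixes V :: "'a set" and E :: "'a set set"
  assumes "graph V E"
    and "claw_free V E"
    and "minimally_tough V E (1/2)"
  shows "\<forall>e\<in>E. \<exists>S. witness_set V E (1/2) e S \<and> card S \<le> 1"
proof
  fix e assume "e \<in> E"
  have "finite V" using assms(1) by (simp add: graph_def)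
  then obtain S where "witness_set V E (1/2) e S"
    using witness_set_exists[OF _ assms(3) _ _ \<open>e \<in> E\<close>] by auto
  moreover have "tough V E (1/2)"
    using assms(3) by (simp add: minimally_tough_def tough_if_toughness_eq)
  ultimately show "\<exists>S. witness_set V E (1/2) e S \<and> card S \<le> 1"
    using card_witness_set_le_1[OF assms(1,2)] by auto
qed

end
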